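(* Let $n\ge 4$ and let $k\ge l\ge 0$ be integers, $\lambda=(2k,k,\dots,k,0)$, $\mu=(2l,l,\dots,l,0)$ in $\Lambda_n$. The $\mathrm{SL}_n(\mathbb{C})$-module $V_n(\lambda)\otimes V_n(\mu)$ contains exactly $(l+1)^2$ distinct self-dual isotypic components; that is, the number of $\nu\in\Lambda_n$ with $c_{\lambda\mu}^\nu\neq 0$ and $\nu_i-\nu_{i+1}=\nu_{n-i}-\nu_{n-i+1}$ for all $1\le i\le n-1$ is $(l+1)^2$.
   Context: $\Lambda_n$ is the set of non-increasing sequences of $n$ nonnegative integers; $(2k,k,\dots,k,0)$ has $n-2$ parts equal to $k$. $V_n(\nu)$ is the irreducible $\mathrm{GL}_n(\mathbb{C})$-module of highest weight $\nu$; its restriction to $\mathrm{SL}_n(\mathbb{C})$ is self-dual exactly when $\nu_i-\nu_{i+1}=\nu_{n-i}-\nu_{n-i+1}$ for all $i$. $c_{\lambda\mu}^\nu$ is defined by $V_n(\lambda)\otimes V_n(\mu)=\bigoplus_\nu c_{\lambda\mu}^\nu V_n(\nu)$. *)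

theory Defs
  imports Main
begin

text \<open>Lambda_n: non-increasing sequences of n nonnegative integers, as lists of length n
  (0-indexed: entry i is the (i+1)-st part).\<close>
definition Lambda :: "nat \<Rightarrow> nat list set" where
  "Lambda n = {nu. length nu = n \<and> (\<forall>i. Suc i < n \<longrightarrow> nu ! Suc i \<le> nu ! i)}"

definition skew_cells :: "nat \<Rightarrow> nat list \<Rightarrow> nat list \<Rightarrow> (nat \<times> nat) set" where
  "skew_cells n lam nu = {(i, j). i < n \<and> lam ! i \<le> j \<and> j < nu ! i}"

text \<open>Reading order (rows top to bottom, each row right to left):
  c' is read no later than c.\<close>
definition read_le :: "nat \<times> nat \<Rightarrow> nat \<times> nat \<Rightarrow> bool" where
  "read_le c' c \<longleftrightarrow> fst c' < fst c \<or> (fst c' = fst c \<and> snd c \<le> snd c')"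

text \<open>Littlewood-Richardson tableaux of shape nu/lam and content mu (entries 0..n-1
  stand for the labels 1..n): semistandard fillings whose reverse reading word is a
  lattice word.\<close>
definition is_LR_tableau ::
  "nat \<Rightarrow> nat list \<Rightarrow> nat list \<Rightarrow> nat list \<Rightarrow> (nat \<times> nat \<Rightarrow> nat) \<Rightarrow> bool" where
  "is_LR_tableau n lam mu nu T \<longleftrightarrow>
     (\<forall>i<n. lam ! i \<le> nu ! i) \<and>
     (\<forall>c. c \<notin> skew_cells n lam nu \<longrightarrow> T c = 0) \<and>
     (\<forall>c\<in>skew_cells n lam nu. T c < n) \<and>
     (\<forall>i j. (i, j) \<in> skew_cells n lam nu \<and> (i, Suc j) \<in> skew_cells n lam nu
            \<longrightarrow> T (i, j) \<le> T (i, Suc j)) \<and>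
     (\<forall>i j. (i, j) \<in> skew_cells n lam nu \<and> (Suc i, j) \<in> skew_cells n lam nu
            \<longrightarrow> T (i, j) < T (Suc i, j)) \<and>
     (\<forall>r<n. card {c \<in> skew_cells n lam nu. T c = r} = mu ! r) \<and>
     (\<forall>c\<in>skew_cells n lam nu. \<forall>r. Suc r < n \<longrightarrow>
        card {c' \<in> skew_cells n lam nu. read_le c' c \<and> T c' = Suc r}
          \<le> card {c' \<in> skew_cells n lam nu. read_le c' c \<and> T c' = r})"

text \<open>Littlewood-Richardson coefficient c^nu_{lam mu} for GL_n (LR rule): the
  multiplicity of V_n(nu) in V_n(lam) \<otimes> V_n(mu).\<close>
definition lr_coeff :: "nat \<Rightarrow> nat list \<Rightarrow> nat list \<Rightarrow> nat list \<Rightarrow> nat" where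
  "lr_coeff n lam mu nu = card {T. is_LR_tableau n lam mu nu T}"

definition self_dual :: "nat \<Rightarrow> nat list \<Rightarrow> bool" where
  "self_dual n nu \<longleftrightarrow> (\<forall>i. 1 \<le> i \<and> i \<le> n - 1 \<longrightarrow>
      int (nu ! (i - 1)) - int (nu ! i) = int (nu ! (n - i - 1)) - int (nu ! (n - i)))"

definition special_wt :: "nat \<Rightarrow> nat \<Rightarrow> nat list" where
  "special_wt n k = (2 * k) # replicate (n - 2) k @ [0]"

end

theory Submission
  imports Defs
begin

(*
  If nu is self-dual, then
  nu ! i + nu ! (n - 1 - i) is independent of i, and since |nu| = |lam| + |mu| = n (k + l)
  it equals 2 (k + l).  In an LR tableau of shape nu / lam and content mu the lattice condition
  forces every entry to be at most its row index, and it excludes the entries 1, ..., n - 3 from the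
  last row, where the content of mu is constant.  Counting the entries of rows 0, 1, 2 and n - 1
  against mu bounds nu ! 2 by k + l, which together with the pairing pins down the middle parts,
  and yields nu = (c + p, c + q, c, ..., c, c - q, c - p) with c = k + l, k + q <= p + l and
  p + q <= k + l.
  Conversely, for each such pair (p, q) the filling in which each row takes two consecutive values
  (row 0 only 0, the last row 0 and n - 2) is an LR tableau.  Finally, q ranges over 0, ..., l,
  with 2 (l - q) + 1 values of p for each q, giving (l + 1)^2 weights.
*)

lemma skew_cells_eq_Sigma: "skew_cells n lam nu = (SIGMA i:{..<n}. {lam ! i..<nu ! i})"
  by (auto simp: skew_cells_def)

lemma finite_skew_cells: "finite (skew_cells n lam nu)"
  by (simp add: skew_cells_eq_Sigma)

lemma card_skew_cells: "card (skew_cells n lam nu) = (\<Sum>i<n. nu ! i - lam ! i)"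
  by (simp add: skew_cells_eq_Sigma card_SigmaI)

lemma card_skew_cells_row:
  assumes "i < n"
  shows "card {c \<in> skew_cells n lam nu. fst c = i} = nu ! i - lam ! i"
proof -
  have "{c \<in> skew_cells n lam nu. fst c = i} = {i} \<times> {lam ! i..<nu ! i}"
    using assms by (auto simp: skew_cells_def)
  then show ?thesis by simp
qed

definition row_count ::
  "nat \<Rightarrow> nat list \<Rightarrow> nat list \<Rightarrow> (nat \<times> nat \<Rightarrow> nat) \<Rightarrow> nat \<Rightarrow> nat \<Rightarrow> nat" where
  "row_count n lam nu T i r = card {c \<in> skew_cells n lam nu. fst c = i \<and> T c = r}"

lemma row_length_eq_sum_row_counts:
  assumes i: "i < n" and "finite R"
    and entries: "\<And>c. c \<in> skew_cells n lam nu \<Longrightarrow> fst c = i \<Longrightarrow> T c \<in> R"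
  shows "nu ! i - lam ! i = (\<Sum>r\<in>R. row_count n lam nu T i r)"
proof -
  let ?S = "skew_cells n lam nu"
  have "{c \<in> ?S. fst c = i} = (\<Union>r\<in>R. {c \<in> ?S. fst c = i \<and> T c = r})"
    using entries by auto
  then have "card {c \<in> ?S. fst c = i} = (\<Sum>r\<in>R. row_count n lam nu T i r)"
    unfolding row_count_def using \<open>finite R\<close>
    by (simp only:) (rule card_UN_disjoint; auto simp: finite_skew_cells)
  then show ?thesis using card_skew_cells_row[OF i] by simp
qed

lemma sum_row_counts_le:
  assumes "finite I" "\<And>i. i \<in> I \<Longrightarrow> P i"
  shows "(\<Sum>i\<in>I. row_count n lam nu T i r) \<le> card {c \<in> skew_cells n lam nu. P (fst c) \<and> T c = r}"
proof -
  let ?S = "skew_cells n lam nu"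
  have "(\<Sum>i\<in>I. row_count n lam nu T i r) = card (\<Union>i\<in>I. {c \<in> ?S. fst c = i \<and> T c = r})"
    unfolding row_count_def using \<open>finite I\<close>
    by (rule card_UN_disjoint[symmetric]) (auto simp: finite_skew_cells)
  also have "\<dots> \<le> card {c \<in> ?S. P (fst c) \<and> T c = r}"
    using assms(2) by (intro card_mono) (auto simp: finite_skew_cells)
  finally show ?thesis .
qed

lemma sum_row_counts_eq:
  assumes "finite I" "\<And>c. c \<in> skew_cells n lam nu \<Longrightarrow> T c = r \<Longrightarrow> fst c \<in> I"
  shows "(\<Sum>i\<in>I. row_count n lam nu T i r) = card {c \<in> skew_cells n lam nu. T c = r}"
proof -
  let ?S = "skew_cells n lam nu"
  have "{c \<in> ?S. T c = r} = (\<Union>i\<in>I. {c \<in> ?S. fst c = i \<and> T c = r})"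
    using assms(2) by auto
  then show ?thesis
    unfolding row_count_def using \<open>finite I\<close>
    by (simp only:) (rule card_UN_disjoint[symmetric]; auto simp: finite_skew_cells)
qed

lemma card_step_function_level_set:
  assumes "lo \<le> t" "t \<le> hi"
  shows "card {j. lo \<le> j \<and> j < hi \<and> (if j < t then a else b) = r}
       = (if a = r then t - lo else 0) + (if b = r then hi - t else 0)"
proof -
  have "{j. lo \<le> j \<and> j < hi \<and> (if j < t then a else b) = r}
      = (if a = r then {lo..<t} else {}) \<union> (if b = r then {t..<hi} else {})"
    using assms by auto
  then show ?thesis by (simp add: card_Un_disjoint ivl_disj_int_two(3))
qed

lemma LR_tableau_row_mono:
  assumes LR: "is_LR_tableau n lam mu nu T"
    and cells: "(i, j) \<in> skew_cells n lam nu" "(i, j') \<in> skew_cells n lam nu" and "j \<le> j'"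
  shows "T (i, j) \<le> T (i, j')"
proof (rule lift_Suc_mono_le_ivl[where f = "\<lambda>j. T (i, j)"])
  show "{j..<j'} \<subseteq> {m. (i, m) \<in> skew_cells n lam nu \<and> (i, Suc m) \<in> skew_cells n lam nu}"
    using cells by (auto simp: skew_cells_def)
qed (use LR assms(4) in \<open>auto simp: is_LR_tableau_def\<close>)

lemma LR_tableau_lattice_rows:
  assumes LR: "is_LR_tableau n lam mu nu T" and r: "Suc r < n"
  shows "card {c \<in> skew_cells n lam nu. fst c \<le> i \<and> T c = Suc r}
       \<le> card {c \<in> skew_cells n lam nu. fst c < i \<and> T c = r}"
proof (cases "{c \<in> skew_cells n lam nu. fst c \<le> i \<and> T c = Suc r} = {}")
  case False
  let ?S = "skew_cells n lam nu"
  let ?A = "{c \<in> ?S. fst c \<le> i \<and> T c = Suc r}"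
  have fin: "finite ?A" by (simp add: finite_skew_cells)
  define i0 where "i0 = Max (fst ` ?A)"
  define j0 where "j0 = Min (snd ` {c \<in> ?A. fst c = i0})"
  have "i0 \<in> fst ` ?A" unfolding i0_def using fin False by (intro Max_in) auto
  then have "{c \<in> ?A. fst c = i0} \<noteq> {}" by auto
  then have "j0 \<in> snd ` {c \<in> ?A. fst c = i0}"
    unfolding j0_def by (intro Min_in) (auto simp: finite_skew_cells)
  then have c0: "(i0, j0) \<in> ?A" by auto
  \<comment> \<open>(i0, j0) is the cell of ?A that is read last\<close>
  have A_before: "?A \<subseteq> {c \<in> ?S. read_le c (i0, j0) \<and> T c = Suc r}"
  proof
    fix c assume c: "c \<in> ?A"
    then have "fst c \<le> i0" unfolding i0_def using fin by auto
    moreover have "fst c = i0 \<Longrightarrow> j0 \<le> snd c"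
      unfolding j0_def using c by (intro Min_le) (auto simp: finite_skew_cells)
    ultimately show "c \<in> {c \<in> ?S. read_le c (i0, j0) \<and> T c = Suc r}"
      using c by (auto simp: read_le_def)
  qed
  have before_rows: "{c \<in> ?S. read_le c (i0, j0) \<and> T c = r} \<subseteq> {c \<in> ?S. fst c < i \<and> T c = r}"
  proof
    fix c assume c: "c \<in> {c \<in> ?S. read_le c (i0, j0) \<and> T c = r}"
    have "fst c \<noteq> i0"
    proof
      assume "fst c = i0"
      then have "T (i0, j0) \<le> T c"
        using c c0 LR_tableau_row_mono[OF LR, of i0 j0 "snd c"] by (cases c) (auto simp: read_le_def)
      then show False using c c0 by simp
    qed
    then show "c \<in> {c \<in> ?S. fst c < i \<and> T c = r}" using c c0 by (auto simp: read_le_def)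
  qed
  have "card ?A \<le> card {c \<in> ?S. read_le c (i0, j0) \<and> T c = Suc r}"
    using A_before by (intro card_mono) (simp_all add: finite_skew_cells)
  also have "\<dots> \<le> card {c \<in> ?S. read_le c (i0, j0) \<and> T c = r}"
    using LR c0 r unfolding is_LR_tableau_def by blast
  also have "\<dots> \<le> card {c \<in> ?S. fst c < i \<and> T c = r}"
    using before_rows by (intro card_mono) (simp_all add: finite_skew_cells)
  finally show ?thesis .
qed (simp only: card.empty le0)

lemma LR_tableau_entry_le_row:
  assumes LR: "is_LR_tableau n lam mu nu T" and "c \<in> skew_cells n lam nu"
  shows "T c \<le> fst c"
  using assms(2)
proof (induction "fst c" arbitrary: c rule: less_induct)
  case less
  show ?case
  proof (cases "T c")
    case (Suc r)
    let ?S = "skew_cells n lam nu"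
    have "T c < n" using LR less.prems by (simp add: is_LR_tableau_def)
    with Suc have "Suc r < n" by simp
    have "1 = card {c}" by simp
    also have "\<dots> \<le> card {c' \<in> ?S. fst c' \<le> fst c \<and> T c' = Suc r}"
      using less.prems Suc by (intro card_mono) (simp_all add: finite_skew_cells)
    also have "\<dots> \<le> card {c' \<in> ?S. fst c' < fst c \<and> T c' = r}"
      by (rule LR_tableau_lattice_rows[OF LR \<open>Suc r < n\<close>])
    finally obtain c' where "c' \<in> ?S" "fst c' < fst c" "T c' = r"
      by (auto simp: Suc_le_eq card_gt_0_iff)
    with less.hyps show ?thesis using Suc by fastforce
  qed simp
qed

lemma lattice_condition_of_rows:
  fixes T :: "nat \<times> nat \<Rightarrow> nat"
  assumes "\<And>i r. Suc r < n \<Longrightarrow> card {c \<in> skew_cells n lam nu. fst c \<le> i \<and> T c = Suc r}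
       \<le> card {c \<in> skew_cells n lam nu. fst c < i \<and> T c = r}"
    and "c \<in> skew_cells n lam nu" "Suc r < n"
  shows "card {c' \<in> skew_cells n lam nu. read_le c' c \<and> T c' = Suc r}
       \<le> card {c' \<in> skew_cells n lam nu. read_le c' c \<and> T c' = r}"
proof -
  let ?S = "skew_cells n lam nu"
  have "card {c' \<in> ?S. read_le c' c \<and> T c' = Suc r} \<le> card {c' \<in> ?S. fst c' \<le> fst c \<and> T c' = Suc r}"
    by (intro card_mono) (auto simp: finite_skew_cells read_le_def)
  also have "\<dots> \<le> card {c' \<in> ?S. fst c' < fst c \<and> T c' = r}"
    using assms(1,3) .
  also have "\<dots> \<le> card {c' \<in> ?S. read_le c' c \<and> T c' = r}"
    by (intro card_mono) (auto simp: finite_skew_cells read_le_def)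
  finally show ?thesis .
qed

lemma LR_tableau_last_row:
  assumes LR: "is_LR_tableau n lam mu nu T" and c: "c \<in> skew_cells n lam nu" "fst c = n - 1"
    and r: "Suc r < n" and "mu ! r \<le> mu ! Suc r"
  shows "T c \<noteq> r"
proof
  assume Tc: "T c = r"
  let ?S = "skew_cells n lam nu"
  have "{c' \<in> ?S. fst c' \<le> n - 1 \<and> T c' = Suc r} = {c' \<in> ?S. T c' = Suc r}"
    by (auto simp: skew_cells_def)
  then have "mu ! Suc r = card {c' \<in> ?S. fst c' \<le> n - 1 \<and> T c' = Suc r}"
    using LR r unfolding is_LR_tableau_def by simp
  also have "\<dots> \<le> card {c' \<in> ?S. fst c' < n - 1 \<and> T c' = r}"
    by (rule LR_tableau_lattice_rows[OF LR r])
  also have "\<dots> < card {c' \<in> ?S. T c' = r}"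
  proof (rule psubset_card_mono)
    have "c \<in> {c' \<in> ?S. T c' = r}" "c \<notin> {c' \<in> ?S. fst c' < n - 1 \<and> T c' = r}"
      using c Tc by auto
    then show "{c' \<in> ?S. fst c' < n - 1 \<and> T c' = r} \<subset> {c' \<in> ?S. T c' = r}" by blast
  qed (simp add: finite_skew_cells)
  also have "\<dots> = mu ! r"
    using LR r unfolding is_LR_tableau_def by simp
  finally show False using assms(5) by simp
qed

lemma card_skew_cells_LR_tableau:
  assumes LR: "is_LR_tableau n lam mu nu T"
  shows "card (skew_cells n lam nu) = (\<Sum>r<n. mu ! r)"
proof -
  let ?S = "skew_cells n lam nu"
  have "?S = (\<Union>r<n. {c \<in> ?S. T c = r})" using LR unfolding is_LR_tableau_def by auto
  then have "card ?S = card (\<Union>r<n. {c \<in> ?S. T c = r})" by simp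
  also have "\<dots> = (\<Sum>r<n. card {c \<in> ?S. T c = r})"
    by (rule card_UN_disjoint) (auto simp: finite_skew_cells)
  also have "\<dots> = (\<Sum>r<n. mu ! r)" using LR unfolding is_LR_tableau_def by simp
  finally show ?thesis .
qed

lemma sum_shape_LR_tableau:
  assumes LR: "is_LR_tableau n lam mu nu T"
  shows "(\<Sum>i<n. nu ! i) = (\<Sum>i<n. lam ! i) + (\<Sum>r<n. mu ! r)"
proof -
  have le: "lam ! i \<le> nu ! i" if "i < n" for i using LR that by (simp add: is_LR_tableau_def)
  have "(\<Sum>r<n. mu ! r) = (\<Sum>i<n. nu ! i - lam ! i)"
    using card_skew_cells_LR_tableau[OF LR] by (simp add: card_skew_cells)
  also have "\<dots> = (\<Sum>i<n. nu ! i) - (\<Sum>i<n. lam ! i)"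
    using le by (intro sum_subtractf_nat) simp
  finally show ?thesis using le sum_mono[of "{..<n}" "\<lambda>i. lam ! i" "\<lambda>i. nu ! i"] by simp
qed

lemma finite_LR_tableaux: "finite {T. is_LR_tableau n lam mu nu T}"
proof (rule finite_subset)
  show "{T. is_LR_tableau n lam mu nu T} \<subseteq>
      {f. \<forall>x. (x \<in> skew_cells n lam nu \<longrightarrow> f x \<in> {..<n}) \<and> (x \<notin> skew_cells n lam nu \<longrightarrow> f x = 0)}"
    unfolding is_LR_tableau_def by auto
qed (intro finite_set_of_finite_funs finite_skew_cells finite_lessThan)

lemma lr_coeff_neq_0_iff: "lr_coeff n lam mu nu \<noteq> 0 \<longleftrightarrow> (\<exists>T. is_LR_tableau n lam mu nu T)"
  using finite_LR_tableaux[of n lam mu nu] by (auto simp: lr_coeff_def)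

lemma length_special_wt: "2 \<le> n \<Longrightarrow> length (special_wt n k) = n"
  by (simp add: special_wt_def)

lemma special_wt_nth:
  "2 \<le> n \<Longrightarrow> i < n \<Longrightarrow> special_wt n k ! i = (if i = 0 then 2 * k else if i = n - 1 then 0 else k)"
  by (auto simp: special_wt_def nth_Cons nth_append split: nat.split)

lemma sum_special_wt: "2 \<le> n \<Longrightarrow> (\<Sum>i<n. special_wt n k ! i) = n * k"
proof -
  assume n: "2 \<le> n"
  have "(\<Sum>i<n. special_wt n k ! i) = sum_list (special_wt n k)"
    by (simp add: sum_list_sum_nth length_special_wt[OF n] atLeast0LessThan)
  also have "\<dots> = (2 + (n - 2)) * k" by (simp add: special_wt_def sum_list_replicate)
  also have "\<dots> = n * k" using n by (simp only: le_add_diff_inverse)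
  finally show ?thesis .
qed

lemma Lambda_antimono: "nu \<in> Lambda n \<Longrightarrow> i \<le> j \<Longrightarrow> j < n \<Longrightarrow> nu ! j \<le> nu ! i"
  unfolding Lambda_def
  by (rule lift_Suc_antimono_le_ivl[where f = "\<lambda>i. nu ! i" and N = "{..<n - 1}"]) auto

lemma Lambda_iff_sorted: "nu \<in> Lambda n \<longleftrightarrow> length nu = n \<and> sorted_wrt (\<ge>) nu"
  by (auto simp: Lambda_def sorted_wrt_iff_nth_Suc_transp transp_on_def)

lemma self_dual_iff_pair_sums:
  "self_dual n nu \<longleftrightarrow> (\<forall>i<n. nu ! i + nu ! (n - 1 - i) = nu ! 0 + nu ! (n - 1))"
proof
  assume sd: "self_dual n nu"
  show "\<forall>i<n. nu ! i + nu ! (n - 1 - i) = nu ! 0 + nu ! (n - 1)"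
  proof (intro allI impI)
    fix i assume "i < n"
    then show "nu ! i + nu ! (n - 1 - i) = nu ! 0 + nu ! (n - 1)"
    proof (induction i)
      case (Suc i)
      have "1 \<le> Suc i \<and> Suc i \<le> n - 1" using Suc.prems by simp
      then have "int (nu ! (Suc i - 1)) - int (nu ! Suc i)
          = int (nu ! (n - Suc i - 1)) - int (nu ! (n - Suc i))"
        using sd unfolding self_dual_def by blast
      then show ?case using Suc by simp
    qed simp
  qed
next
  assume pairs: "\<forall>i<n. nu ! i + nu ! (n - 1 - i) = nu ! 0 + nu ! (n - 1)"
  show "self_dual n nu"
    unfolding self_dual_def
  proof (intro allI impI)
    fix i assume i: "1 \<le> i \<and> i \<le> n - 1"
    have "i - 1 < n" "i < n" using i by auto
    then have "nu ! (i - 1) + nu ! (n - 1 - (i - 1)) = nu ! i + nu ! (n - 1 - i)"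
      using pairs by (metis (no_types, lifting))
    moreover have "n - 1 - (i - 1) = n - i" "n - 1 - i = n - i - 1" using i by auto
    ultimately have "nu ! (i - 1) + nu ! (n - i) = nu ! i + nu ! (n - i - 1)" by simp
    then show "int (nu ! (i - 1)) - int (nu ! i) = int (nu ! (n - i - 1)) - int (nu ! (n - i))"
      by linarith
  qed
qed

lemma self_dual_pair_sum:
  assumes sd: "self_dual n nu" and sum: "(\<Sum>i<n. nu ! i) = n * c" and i: "i < n"
  shows "nu ! i + nu ! (n - 1 - i) = 2 * c"
proof -
  define s where "s = nu ! 0 + nu ! (n - 1)"
  have pairs: "\<And>i. i < n \<Longrightarrow> nu ! i + nu ! (n - 1 - i) = s"
    using sd unfolding s_def self_dual_iff_pair_sums by blast
  have "(\<Sum>i<n. nu ! i + nu ! (n - 1 - i)) = (\<Sum>i<n. s)"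
    by (rule sum.cong[OF refl], rule pairs, simp)
  then have "n * s = (\<Sum>i<n. nu ! i) + (\<Sum>i<n. nu ! (n - Suc i))"
    by (simp add: sum.distrib)
  also have "(\<Sum>i<n. nu ! (n - Suc i)) = (\<Sum>i<n. nu ! i)" by (rule sum.nat_diff_reindex)
  finally have "n * s = n * (2 * c)" using sum by simp
  then have "s = 2 * c" using i by simp
  then show ?thesis using pairs[OF i] by simp
qed

definition sd_wt :: "nat \<Rightarrow> nat \<Rightarrow> nat \<Rightarrow> nat \<Rightarrow> nat list" where
  "sd_wt n c p q = (c + p) # (c + q) # replicate (n - 4) c @ [c - q, c - p]"

lemma length_sd_wt: "4 \<le> n \<Longrightarrow> length (sd_wt n c p q) = n"
  by (simp add: sd_wt_def)

lemma sd_wt_nth: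
  assumes "4 \<le> n" "i < n"
  shows "sd_wt n c p q ! i = (if i = 0 then c + p else if i = 1 then c + q
     else if i = n - 2 then c - q else if i = n - 1 then c - p else c)"
  using assms by (auto simp: sd_wt_def nth_Cons nth_append numeral_eq_Suc split: nat.split)

lemma sd_wt_in_Lambda:
  assumes "4 \<le> n" "q \<le> p"
  shows "sd_wt n c p q \<in> Lambda n"
proof -
  have "sorted_wrt (\<ge>) (replicate (n - 4) c)" by (simp add: sorted_wrt_iff_nth_less)
  then show ?thesis using assms by (auto simp: Lambda_iff_sorted sd_wt_def sorted_wrt_append)
qed

lemma sd_wt_nth_middle: "4 \<le> n \<Longrightarrow> 2 \<le> i \<Longrightarrow> i \<le> n - 3 \<Longrightarrow> sd_wt n c p q ! i = c"
  by (auto simp: sd_wt_nth)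

lemma sd_wt_pair_sum:
  assumes n: "4 \<le> n" and "q \<le> p" "p \<le> c" and i: "i < n"
  shows "sd_wt n c p q ! i + sd_wt n c p q ! (n - 1 - i) = 2 * c"
proof -
  consider "i = 0" | "i = 1" | "i = n - 2" | "i = n - 1" | "2 \<le> i" "i \<le> n - 3"
    using i by linarith
  then show ?thesis
  proof cases
    case 1 then show ?thesis using assms by (auto simp: sd_wt_nth)
  next
    case 2
    then have "n - 1 - i = n - 2" by simp
    then show ?thesis using assms 2 by (auto simp: sd_wt_nth)
  next
    case 3
    then have "n - 1 - i = 1" using n by simp
    then show ?thesis using assms 3 by (auto simp: sd_wt_nth)
  next
    case 4
    then have "n - 1 - i = 0" by simp
    then show ?thesis using assms 4 by (auto simp: sd_wt_nth)
  next
    case 5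
    then have "2 \<le> n - 1 - i" "n - 1 - i \<le> n - 3" using n by auto
    then show ?thesis using 5 n by (simp add: sd_wt_nth_middle)
  qed
qed

lemma self_dual_sd_wt:
  assumes "4 \<le> n" "q \<le> p" "p \<le> c"
  shows "self_dual n (sd_wt n c p q)"
proof -
  have "sd_wt n c p q ! 0 + sd_wt n c p q ! (n - 1) = 2 * c"
    using sd_wt_pair_sum[OF assms, of 0] assms(1) by simp
  then show ?thesis
    unfolding self_dual_iff_pair_sums using sd_wt_pair_sum[OF assms] by simp
qed

lemma sd_wt_inject: "4 \<le> n \<Longrightarrow> sd_wt n c p q = sd_wt n c p' q' \<longleftrightarrow> p = p' \<and> q = q'"
proof
  assume "4 \<le> n" and eq: "sd_wt n c p q = sd_wt n c p' q'"
  have "sd_wt n c p q ! 0 = sd_wt n c p' q' ! 0" "sd_wt n c p q ! 1 = sd_wt n c p' q' ! 1"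
    using eq by simp_all
  then show "p = p' \<and> q = q'" by (simp add: sd_wt_def)
qed simp

lemma sd_wt_eqI:
  assumes n: "4 \<le> n" and len: "length nu = n"
    and pairs: "\<And>i. i < n \<Longrightarrow> nu ! i + nu ! (n - 1 - i) = 2 * c"
    and middle: "\<And>i. 2 \<le> i \<Longrightarrow> i \<le> n - 3 \<Longrightarrow> nu ! i = c"
    and "c \<le> nu ! 0" "c \<le> nu ! 1"
  shows "nu = sd_wt n c (nu ! 0 - c) (nu ! 1 - c)"
proof (rule nth_equalityI)
  show "length nu = length (sd_wt n c (nu ! 0 - c) (nu ! 1 - c))"
    using n len by (simp add: length_sd_wt)
next
  fix i assume "i < length nu"
  then have i: "i < n" using len by simp
  have last: "nu ! (n - 1) = c - (nu ! 0 - c)" using pairs[of 0] n \<open>c \<le> nu ! 0\<close> by simp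
  have "n - 1 - 1 = n - 2" by simp
  then have second_last: "nu ! (n - 2) = c - (nu ! 1 - c)"
    using pairs[of 1] n \<open>c \<le> nu ! 1\<close> by simp
  consider "i = 0" | "i = 1" | "i = n - 2" | "i = n - 1" | "2 \<le> i" "i \<le> n - 3"
    using i by linarith
  then show "nu ! i = sd_wt n c (nu ! 0 - c) (nu ! 1 - c) ! i"
    by cases (use n i assms(5,6) last second_last middle in \<open>auto simp: sd_wt_nth\<close>)
qed

locale special_LR_tableau =
  fixes n k l :: nat and nu :: "nat list" and T :: "nat \<times> nat \<Rightarrow> nat"
  assumes n_ge_4: "4 \<le> n" and nu_Lambda: "nu \<in> Lambda n"
    and LR: "is_LR_tableau n (special_wt n k) (special_wt n l) nu T"
begin

abbreviation cells :: "(nat \<times> nat) set" where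
  "cells \<equiv> skew_cells n (special_wt n k) nu"

abbreviation cnt :: "nat \<Rightarrow> nat \<Rightarrow> nat" where
  "cnt \<equiv> row_count n (special_wt n k) nu T"

lemma lam_0: "special_wt n k ! 0 = 2 * k"
  by (simp add: special_wt_def)

lemma lam_middle: "1 \<le> i \<Longrightarrow> i \<le> n - 2 \<Longrightarrow> special_wt n k ! i = k"
  using n_ge_4 by (auto simp: special_wt_nth)

lemma mu_0: "special_wt n l ! 0 = 2 * l"
  by (simp add: special_wt_def)

lemma mu_middle: "1 \<le> r \<Longrightarrow> r \<le> n - 2 \<Longrightarrow> special_wt n l ! r = l"
  using n_ge_4 by (auto simp: special_wt_nth)

lemma mu_last: "special_wt n l ! (n - 1) = 0"
  using n_ge_4 by (simp add: special_wt_nth)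

lemma lam_le_nu: "i < n \<Longrightarrow> special_wt n k ! i \<le> nu ! i"
  using LR by (simp add: is_LR_tableau_def)

lemma entry_le_row: "c \<in> cells \<Longrightarrow> T c \<le> fst c"
  by (rule LR_tableau_entry_le_row[OF LR])

lemma entry_row_2:
  assumes c: "c \<in> cells" "fst c = 2"
  shows "T c = 1 \<or> T c = 2"
proof -
  obtain j where j: "c = (2, j)" using c by (cases c) simp
  have "nu ! 2 \<le> nu ! 1" using Lambda_antimono[OF nu_Lambda, of 1 2] n_ge_4 by simp
  moreover have "special_wt n k ! 1 = special_wt n k ! 2" using n_ge_4 by (simp add: lam_middle)
  ultimately have "(1, j) \<in> cells" using c j n_ge_4 by (auto simp: skew_cells_def)
  then have "T (1, j) < T c"
    using LR c j unfolding is_LR_tableau_def by (simp add: numeral_2_eq_2)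
  moreover have "T c \<le> 2" using entry_le_row[OF c(1)] c by simp
  ultimately show ?thesis by linarith
qed

lemma entry_last_row:
  assumes c: "c \<in> cells" "fst c = n - 1"
  shows "T c = 0 \<or> T c = n - 2"
proof -
  have "T c < n" using LR c by (simp add: is_LR_tableau_def)
  moreover have "T c \<noteq> n - 1"
  proof
    assume "T c = n - 1"
    then have "card {c} \<le> card {c' \<in> cells. T c' = n - 1}"
      using c by (intro card_mono) (simp_all add: finite_skew_cells)
    moreover have "card {c' \<in> cells. T c' = n - 1} = 0"
      using LR n_ge_4 mu_last by (simp add: is_LR_tableau_def)
    ultimately show False by simp
  qed
  moreover have "\<not> (1 \<le> T c \<and> T c \<le> n - 3)"
  proof
    assume r: "1 \<le> T c \<and> T c \<le> n - 3"
    have "Suc (T c) < n" using r n_ge_4 by linarith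
    moreover have "special_wt n l ! T c = l" using r n_ge_4 by (intro mu_middle) linarith+
    moreover have "special_wt n l ! Suc (T c) = l" using r n_ge_4 by (intro mu_middle) linarith+
    ultimately show False using LR_tableau_last_row[OF LR c, of "T c"] by simp
  qed
  ultimately show ?thesis by linarith
qed

lemma sum_cnt_le_content:
  assumes "finite I" "r < n"
  shows "(\<Sum>i\<in>I. cnt i r) \<le> special_wt n l ! r"
proof -
  have "(\<Sum>i\<in>I. cnt i r) \<le> card {c \<in> cells. True \<and> T c = r}"
    by (rule sum_row_counts_le[OF assms(1)]) simp
  then show ?thesis using LR assms(2) by (simp add: is_LR_tableau_def)
qed

lemma cnt_Suc_le:
  assumes "Suc r < n"
  shows "cnt (Suc i) (Suc r) \<le> card {c \<in> cells. fst c \<le> i \<and> T c = r}"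
proof -
  have "cnt (Suc i) (Suc r) \<le> card {c \<in> cells. fst c \<le> Suc i \<and> T c = Suc r}"
    unfolding row_count_def by (intro card_mono) (auto simp: finite_skew_cells)
  also have "\<dots> \<le> card {c \<in> cells. fst c < Suc i \<and> T c = r}"
    by (rule LR_tableau_lattice_rows[OF LR assms])
  finally show ?thesis by (simp add: less_Suc_eq_le)
qed

lemma cnt_1_1_le: "cnt 1 1 \<le> cnt 0 0"
  using cnt_Suc_le[of 0 0] n_ge_4 by (simp add: row_count_def)

lemma cnt_2_2_le: "cnt 2 2 \<le> cnt 1 1"
proof -
  have "{c \<in> cells. fst c \<le> 1 \<and> T c = 1} = {c \<in> cells. fst c = 1 \<and> T c = 1}"
    using entry_le_row by (force simp: le_Suc_eq)
  then show ?thesis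
    using cnt_Suc_le[of 1 1] n_ge_4 by (simp add: row_count_def numeral_2_eq_2)
qed

lemma nu_2_le: "nu ! 2 \<le> k + l"
proof -
  have "nu ! 2 - special_wt n k ! 2 = (\<Sum>r\<in>{1, 2}. cnt 2 r)"
    by (rule row_length_eq_sum_row_counts) (use n_ge_4 entry_row_2 in auto)
  then have "nu ! 2 - k = cnt 2 1 + cnt 2 2" using n_ge_4 by (simp add: lam_middle)
  also have "\<dots> \<le> cnt 1 1 + cnt 2 1" using cnt_2_2_le by simp
  also have "\<dots> \<le> l"
    using sum_cnt_le_content[of "{1, 2}" 1] n_ge_4 by (simp add: mu_middle)
  finally show ?thesis by simp
qed

lemma nu_0_eq: "nu ! 0 = 2 * k + cnt 0 0"
proof -
  have "nu ! 0 - special_wt n k ! 0 = (\<Sum>r\<in>{0}. cnt 0 r)"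
    by (rule row_length_eq_sum_row_counts) (use n_ge_4 entry_le_row in fastforce)+
  then show ?thesis using lam_le_nu[of 0] n_ge_4 by (simp add: lam_0)
qed

lemma nu_1_eq: "nu ! 1 = k + cnt 1 0 + cnt 1 1"
proof -
  have "nu ! 1 - special_wt n k ! 1 = (\<Sum>r\<in>{0, 1}. cnt 1 r)"
    by (rule row_length_eq_sum_row_counts) (use n_ge_4 entry_le_row in fastforce)+
  then show ?thesis using lam_le_nu[of 1] n_ge_4 by (simp add: lam_middle)
qed

lemma nu_1_plus_nu_last_le: "nu ! 1 + nu ! (n - 1) \<le> k + 3 * l"
proof -
  have "nu ! (n - 1) - special_wt n k ! (n - 1) = (\<Sum>r\<in>{0, n - 2}. cnt (n - 1) r)"
    by (rule row_length_eq_sum_row_counts) (use n_ge_4 entry_last_row in auto)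
  then have last: "nu ! (n - 1) = cnt (n - 1) 0 + cnt (n - 1) (n - 2)"
    using n_ge_4 by (simp add: special_wt_nth)
  have "cnt 0 0 + cnt 1 0 + cnt (n - 1) 0 \<le> 2 * l"
    using sum_cnt_le_content[of "{0, 1, n - 1}" 0] n_ge_4 by (simp add: mu_0)
  moreover have "cnt (n - 1) (n - 2) \<le> l"
    using sum_cnt_le_content[of "{n - 1}" "n - 2"] n_ge_4 by (simp add: mu_middle)
  ultimately show ?thesis using nu_1_eq last cnt_1_1_le by linarith
qed

lemma nu_0_plus_nu_1_le: "nu ! 0 + nu ! 1 \<le> 3 * (k + l)"
proof -
  have "cnt 0 0 + cnt 1 0 \<le> 2 * l"
    using sum_cnt_le_content[of "{0, 1}" 0] n_ge_4 by (simp add: mu_0)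
  moreover have "cnt 1 1 \<le> l"
    using sum_cnt_le_content[of "{1}" 1] n_ge_4 by (simp add: mu_middle)
  ultimately show ?thesis using nu_0_eq nu_1_eq unfolding distrib_left by linarith
qed

lemma self_dual_shape:
  assumes sd: "self_dual n nu"
  obtains p q where "nu = sd_wt n (k + l) p q" "k + q \<le> p + l" "p + q \<le> k + l"
proof -
  let ?c = "k + l"
  have "(\<Sum>i<n. nu ! i) = n * ?c"
    using sum_shape_LR_tableau[OF LR] n_ge_4 by (simp add: sum_special_wt add_mult_distrib2)
  then have pairs: "\<And>i. i < n \<Longrightarrow> nu ! i + nu ! (n - 1 - i) = 2 * ?c"
    by (rule self_dual_pair_sum[OF sd])
  have antimono: "\<And>i j. i \<le> j \<Longrightarrow> j < n \<Longrightarrow> nu ! j \<le> nu ! i"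
    by (rule Lambda_antimono[OF nu_Lambda])
  have middle: "nu ! i = ?c" if "2 \<le> i" "i \<le> n - 3" for i
  proof -
    have "nu ! i \<le> nu ! 2" "nu ! (n - 1 - i) \<le> nu ! 2"
      using antimono that n_ge_4 by auto
    moreover have "i < n" using that n_ge_4 by linarith
    ultimately show ?thesis using pairs[of i] nu_2_le by simp
  qed
  have "nu ! (n - 2) \<le> nu ! 2" using antimono n_ge_4 by simp
  then have c_le_1: "?c \<le> nu ! 1" using pairs[of 1] nu_2_le n_ge_4 by (simp add: numeral_2_eq_2)
  have "nu ! 1 \<le> nu ! 0" using antimono n_ge_4 by simp
  have "nu = sd_wt n ?c (nu ! 0 - ?c) (nu ! 1 - ?c)"
  proof (rule sd_wt_eqI[OF n_ge_4 _ pairs middle])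
    show "length nu = n" using nu_Lambda by (simp add: Lambda_def)
  qed (use c_le_1 \<open>nu ! 1 \<le> nu ! 0\<close> in simp_all)
  moreover have "nu ! 0 + nu ! (n - 1) = 2 * ?c" using pairs[of 0] n_ge_4 by simp
  ultimately show ?thesis
    using that nu_1_plus_nu_last_le nu_0_plus_nu_1_le c_le_1 \<open>nu ! 1 \<le> nu ! 0\<close> by simp
qed

end

locale sd_LR_construction =
  fixes n k l p q :: nat
  assumes n_ge_4: "4 \<le> n" and l_le_k: "l \<le> k" and lower: "k + q \<le> p + l" and upper: "p + q \<le> k + l"
begin

abbreviation nu :: "nat list" where
  "nu \<equiv> sd_wt n (k + l) p q"

abbreviation lam :: "nat list" where
  "lam \<equiv> special_wt n k"

abbreviation cells :: "(nat \<times> nat) set" where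
  "cells \<equiv> skew_cells n lam nu"

definition excess :: nat where
  "excess = p - k" \<comment> \<open>truncated: 0 when p \<le> k\<close>

definition left_entry :: "nat \<Rightarrow> nat" where
  "left_entry i = (if i = 0 \<or> i = n - 1 then 0 else i - 1)"

definition right_entry :: "nat \<Rightarrow> nat" where
  "right_entry i = (if i = 0 then 0 else if i = n - 1 then n - 2 else i)"

definition split_col :: "nat \<Rightarrow> nat" where
  "split_col i = (if i = 0 then k + l + p else if i = 1 then k + l - excess
     else if i = n - 1 then k - p else k + l - q - excess)"

definition tab :: "nat \<times> nat \<Rightarrow> nat" where
  "tab c = (if c \<in> cells
     then if snd c < split_col (fst c) then left_entry (fst c) else right_entry (fst c) else 0)"

abbreviation cnt :: "nat \<Rightarrow> nat \<Rightarrow> nat" where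
  "cnt \<equiv> row_count n lam nu tab"

lemma q_le_p: "q \<le> p"
  using lower l_le_k by simp

lemma q_plus_excess_le: "q + excess \<le> l"
  using lower upper by (auto simp: excess_def)

lemma nu_nth: "i < n \<Longrightarrow> nu ! i = (if i = 0 then k + l + p else if i = 1 then k + l + q
     else if i = n - 2 then k + l - q else if i = n - 1 then k + l - p else k + l)"
  using n_ge_4 by (simp add: sd_wt_nth)

lemma lam_nth: "i < n \<Longrightarrow> lam ! i = (if i = 0 then 2 * k else if i = n - 1 then 0 else k)"
  using n_ge_4 by (simp add: special_wt_nth)

lemma split_col_between: "i < n \<Longrightarrow> lam ! i \<le> split_col i \<and> split_col i \<le> nu ! i"
  using n_ge_4 lower upper l_le_k q_plus_excess_le
  by (auto simp: nu_nth lam_nth split_col_def excess_def)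

lemma cnt_eq:
  assumes i: "i < n"
  shows "cnt i r = (if left_entry i = r then split_col i - lam ! i else 0)
    + (if right_entry i = r then nu ! i - split_col i else 0)"
proof -
  let ?J = "{j. lam ! i \<le> j \<and> j < nu ! i \<and> (if j < split_col i then left_entry i else right_entry i) = r}"
  have "{c \<in> cells. fst c = i \<and> tab c = r} = Pair i ` ?J"
    using i by (auto simp: skew_cells_def tab_def)
  then have "cnt i r = card (Pair i ` ?J)" by (simp only: row_count_def)
  also have "\<dots> = card ?J" by (rule card_image) (simp add: inj_on_def)
  finally have "cnt i r = card ?J" .
  then show ?thesis using split_col_between[OF i] by (simp add: card_step_function_level_set)
qed

lemma tab_cases: "c \<in> cells \<Longrightarrow> tab c = left_entry (fst c) \<or> tab c = right_entry (fst c)"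
  by (simp add: tab_def)

lemma tab_le_row: "tab c \<le> fst c"
  using tab_cases[of c] by (auto simp: tab_def left_entry_def right_entry_def)

lemma tab_le: "tab c \<le> n - 2"
proof (cases "c \<in> cells")
  case True
  then have "fst c < n" by (auto simp: skew_cells_def)
  then show ?thesis using tab_cases[OF True] by (auto simp: left_entry_def right_entry_def)
qed (simp add: tab_def)

lemma tab_0_rows: "c \<in> cells \<Longrightarrow> tab c = 0 \<Longrightarrow> fst c \<in> {0, 1, n - 1}"
  using tab_cases[of c] by (auto simp: left_entry_def right_entry_def split: if_splits)

lemma tab_pos_rows: "c \<in> cells \<Longrightarrow> 0 < tab c \<Longrightarrow> fst c = tab c \<or> fst c = Suc (tab c)"
  using tab_cases[of c] by (auto simp: left_entry_def right_entry_def split: if_splits)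

lemma row_0_data: "left_entry 0 = 0" "right_entry 0 = 0" "split_col 0 = k + l + p"
  "lam ! 0 = 2 * k" "nu ! 0 = k + l + p"
  using n_ge_4 by (simp_all add: left_entry_def right_entry_def split_col_def lam_nth nu_nth)

lemma row_1_data: "left_entry 1 = 0" "right_entry 1 = 1" "split_col 1 = k + l - excess"
  "lam ! 1 = k" "nu ! 1 = k + l + q"
  using n_ge_4 by (auto simp: left_entry_def right_entry_def split_col_def lam_nth nu_nth)

lemma middle_row_data:
  assumes "2 \<le> i" "i \<le> n - 2"
  shows "left_entry i = i - 1" "right_entry i = i" "split_col i = k + l - q - excess" "lam ! i = k"
  using assms n_ge_4 by (auto simp: left_entry_def right_entry_def split_col_def lam_nth)

lemma second_last_row_nu: "nu ! (n - 2) = k + l - q"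
  using n_ge_4 by (auto simp: nu_nth)

lemma last_row_data: "left_entry (n - 1) = 0" "right_entry (n - 1) = n - 2" "split_col (n - 1) = k - p"
  "lam ! (n - 1) = 0" "nu ! (n - 1) = k + l - p"
  using n_ge_4 by (auto simp: left_entry_def right_entry_def split_col_def lam_nth nu_nth)

lemma cnt_0_0: "cnt 0 0 = p + l - k"
  using cnt_eq[of 0 0] n_ge_4 unfolding row_0_data by simp

lemma cnt_1_0: "cnt 1 0 = l - excess"
  using cnt_eq[of 1 0] n_ge_4 unfolding row_1_data by simp

lemma cnt_1_1: "cnt 1 1 = q + excess"
  using cnt_eq[of 1 1] n_ge_4 q_plus_excess_le unfolding row_1_data by simp

lemma cnt_subdiag: "2 \<le> i \<Longrightarrow> i \<le> n - 2 \<Longrightarrow> cnt i (i - 1) = l - q - excess"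
  using cnt_eq[of i "i - 1"] n_ge_4 by (auto simp: middle_row_data)

lemma cnt_diag: "2 \<le> i \<Longrightarrow> i \<le> n - 3 \<Longrightarrow> cnt i i = q + excess"
  using cnt_eq[of i i] n_ge_4 q_plus_excess_le by (auto simp: middle_row_data sd_wt_nth_middle)

lemma cnt_second_last: "cnt (n - 2) (n - 2) = excess"
  using cnt_eq[of "n - 2" "n - 2"] n_ge_4 q_plus_excess_le
  by (auto simp: middle_row_data second_last_row_nu)

lemma cnt_last_0: "cnt (n - 1) 0 = k - p"
  using cnt_eq[of "n - 1" 0] n_ge_4 unfolding last_row_data by simp

lemma cnt_last_second_last: "cnt (n - 1) (n - 2) = l - excess"
  using cnt_eq[of "n - 1" "n - 2"] n_ge_4 unfolding last_row_data by (auto simp: excess_def)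

lemma cnt_diag_plus_subdiag: "1 \<le> r \<Longrightarrow> r \<le> n - 2 \<Longrightarrow> cnt r r + cnt (Suc r) r = l"
  using q_plus_excess_le n_ge_4 cnt_1_1 cnt_diag[of r] cnt_subdiag[of "Suc r"] cnt_second_last
    cnt_last_second_last
  by (cases "r = 1"; cases "r = n - 2") (auto simp: Suc_diff_Suc numeral_2_eq_2)

lemma tab_content:
  assumes r: "r < n"
  shows "card {c \<in> cells. tab c = r} = special_wt n l ! r"
proof -
  consider "r = 0" | "1 \<le> r" "r \<le> n - 2" | "r = n - 1" using r by linarith
  then show ?thesis
  proof cases
    case 1
    have "card {c \<in> cells. tab c = 0} = (\<Sum>i\<in>{0, 1, n - 1}. cnt i 0)"
      using tab_0_rows by (intro sum_row_counts_eq[symmetric]) auto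
    also have "\<dots> = cnt 0 0 + cnt 1 0 + cnt (n - 1) 0" using n_ge_4 by simp
    also have "\<dots> = 2 * l" using lower upper unfolding cnt_0_0 cnt_1_0 cnt_last_0 excess_def by linarith
    finally show ?thesis using 1 by (simp add: special_wt_def)
  next
    case 2
    have "card {c \<in> cells. tab c = r} = (\<Sum>i\<in>{r, Suc r}. cnt i r)"
      using 2 tab_pos_rows by (intro sum_row_counts_eq[symmetric]) force+
    also have "\<dots> = l" using 2 cnt_diag_plus_subdiag by simp
    finally show ?thesis using 2 n_ge_4 by (auto simp: special_wt_nth)
  next
    case 3
    have "tab c \<noteq> r" for c using 3 tab_le[of c] n_ge_4 by linarith
    then have "{c \<in> cells. tab c = r} = {}" by blast
    then show ?thesis using 3 n_ge_4 by (simp only: card.empty) (simp add: special_wt_nth)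
  qed
qed

lemma cnt_diag_Suc_le: "Suc r \<le> n - 2 \<Longrightarrow> cnt (Suc r) (Suc r) \<le> cnt r r"
  using cnt_0_0 cnt_1_1 cnt_diag[of r] cnt_diag[of "Suc r"] cnt_second_last lower upper l_le_k
  by (cases "r = 0"; cases "r = 1"; cases "Suc r = n - 2") (auto simp: excess_def)

lemma tab_lattice_rows:
  assumes r: "Suc r < n"
  shows "card {c \<in> cells. fst c \<le> i \<and> tab c = Suc r} \<le> card {c \<in> cells. fst c < i \<and> tab c = r}"
proof -
  consider "i \<le> r \<or> Suc r = n - 1" | "i = Suc r" "Suc r \<le> n - 2" | "Suc (Suc r) \<le> i" "Suc r \<le> n - 2"
    using r by linarith
  then show ?thesis
  proof cases
    case 1
    have "\<not> (fst c \<le> i \<and> tab c = Suc r)" for c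
      using 1 tab_le_row[of c] tab_le[of c] n_ge_4 by auto
    then have "{c \<in> cells. fst c \<le> i \<and> tab c = Suc r} = {}" by blast
    then show ?thesis by (simp only: card.empty le0)
  next
    case 2
    have "fst c = Suc r" if "fst c \<le> i" "tab c = Suc r" for c
      using that 2 tab_le_row[of c] by simp
    then have "card {c \<in> cells. fst c \<le> i \<and> tab c = Suc r} \<le> cnt (Suc r) (Suc r)"
      unfolding row_count_def by (intro card_mono) (auto simp: finite_skew_cells)
    also have "\<dots> \<le> cnt r r" using 2(2) by (rule cnt_diag_Suc_le)
    also have "\<dots> \<le> card {c \<in> cells. fst c < i \<and> tab c = r}"
      using sum_row_counts_le[of "{r}" "\<lambda>i'. i' < i" n lam nu tab r] 2 by simp
    finally show ?thesis .
  next
    case 3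
    have "card {c \<in> cells. fst c \<le> i \<and> tab c = Suc r} \<le> card {c \<in> cells. tab c = Suc r}"
      by (intro card_mono) (auto simp: finite_skew_cells)
    also have "\<dots> = l" using 3 tab_content[of "Suc r"] n_ge_4 by (auto simp: special_wt_nth)
    also have "\<dots> \<le> (\<Sum>i'\<in>{r, Suc r}. cnt i' r)"
    proof (cases "r = 0")
      case True
      have "l \<le> cnt 0 0 + cnt 1 0" using lower upper unfolding cnt_0_0 cnt_1_0 excess_def by linarith
      then show ?thesis using True by (simp add: One_nat_def)
    next
      case False
      then show ?thesis using 3 cnt_diag_plus_subdiag[of r] by simp
    qed
    also have "\<dots> \<le> card {c \<in> cells. fst c < i \<and> tab c = r}"
      using 3 by (intro sum_row_counts_le) auto
    finally show ?thesis .
  qed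
qed

lemma tab_row_mono: "(i, j) \<in> cells \<Longrightarrow> (i, Suc j) \<in> cells \<Longrightarrow> tab (i, j) \<le> tab (i, Suc j)"
  by (auto simp: tab_def left_entry_def right_entry_def)

lemma tab_column_strict:
  assumes c: "(i, j) \<in> cells" "(Suc i, j) \<in> cells"
  shows "tab (i, j) < tab (Suc i, j)"
proof -
  have i: "Suc i < n" and j: "lam ! i \<le> j" "j < nu ! Suc i" using c by (auto simp: skew_cells_def)
  consider "i = 0" | "1 \<le> i" "Suc i \<le> n - 2" | "Suc i = n - 1" using i by linarith
  then show ?thesis
  proof cases
    case 1
    then have "split_col 1 \<le> j"
      using j l_le_k by (simp add: row_0_data row_1_data row_1_data[unfolded One_nat_def])
    then show ?thesis using c 1 by (simp add: tab_def row_0_data row_1_data[unfolded One_nat_def])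
  next
    case 2
    then have "split_col (Suc i) \<le> split_col i"
      by (cases "i = 1") (simp_all add: row_1_data[unfolded One_nat_def] middle_row_data)
    moreover have "left_entry (Suc i) = i" "right_entry (Suc i) = Suc i"
      "right_entry i = i" "left_entry i < i"
      using 2 row_1_data[unfolded One_nat_def] middle_row_data[of i] middle_row_data[of "Suc i"]
      by (cases "i = 1"; simp)+
    ultimately show ?thesis using c by (auto simp: tab_def)
  next
    case 3
    have data: "lam ! i = k" "nu ! Suc i = k + l - p" "split_col (Suc i) = k - p"
      "split_col i = k + l - q - excess" "left_entry i = n - 3" "right_entry (Suc i) = n - 2"
      using 3 n_ge_4 by (auto simp: lam_nth nu_nth split_col_def left_entry_def right_entry_def)
    have "q + excess \<le> p" using q_le_p q_plus_excess_le l_le_k by (auto simp: excess_def)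
    then have "split_col (Suc i) \<le> j" "j < split_col i" using j unfolding data by auto
    then show ?thesis using c n_ge_4 by (simp add: tab_def data)
  qed
qed

lemma tab_is_LR_tableau: "is_LR_tableau n lam (special_wt n l) nu tab"
  unfolding is_LR_tableau_def
proof (intro conjI allI impI ballI)
  show "lam ! i \<le> nu ! i" if "i < n" for i using split_col_between[OF that] by simp
  show "tab c = 0" if "c \<notin> cells" for c using that by (simp add: tab_def)
  show "tab c < n" if "c \<in> cells" for c using tab_le[of c] n_ge_4 by simp
  show "card {c \<in> cells. tab c = r} = special_wt n l ! r" if "r < n" for r
    using that by (rule tab_content)
  show "card {c' \<in> cells. read_le c' c \<and> tab c' = Suc r} \<le> card {c' \<in> cells. read_le c' c \<and> tab c' = r}"
    if "c \<in> cells" "Suc r < n" for c r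
    using lattice_condition_of_rows[OF tab_lattice_rows that] .
qed (use tab_row_mono tab_column_strict in blast)+

end

lemma sum_odd_numbers: "(\<Sum>q\<le>l. 2 * q + 1) = (l + 1) ^ 2" for l :: nat
  by (induction l) (simp_all add: power2_eq_square)

lemma card_self_dual_parameters:
  assumes "l \<le> k"
  shows "card {(q, p). k + q \<le> p + l \<and> p + q \<le> k + l} = (l + 1) ^ 2"
proof -
  have "{(q, p). k + q \<le> p + l \<and> p + q \<le> k + l} = (SIGMA q:{..l}. {k + q - l..k + l - q})"
    by auto
  then have "card {(q, p). k + q \<le> p + l \<and> p + q \<le> k + l} = (\<Sum>q\<le>l. card {k + q - l..k + l - q})"
    by (simp add: card_SigmaI)
  also have "\<dots> = (\<Sum>q\<le>l. 2 * (l - q) + 1)"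
    using assms by (intro sum.cong) auto
  also have "\<dots> = (\<Sum>q\<le>l. 2 * q + 1)"
    by (rule sum.reindex_bij_witness[of _ "\<lambda>q. l - q" "\<lambda>q. l - q"]) auto
  also have "\<dots> = (l + 1) ^ 2" by (rule sum_odd_numbers)
  finally show ?thesis .
qed

lemma self_dual_LR_support:
  assumes "4 \<le> n" "l \<le> k"
  shows "{nu \<in> Lambda n. lr_coeff n (special_wt n k) (special_wt n l) nu \<noteq> 0 \<and> self_dual n nu}
    = (\<lambda>(q, p). sd_wt n (k + l) p q) ` {(q, p). k + q \<le> p + l \<and> p + q \<le> k + l}"
proof (intro equalityI subsetI)
  fix nu
  assume "nu \<in> {nu \<in> Lambda n. lr_coeff n (special_wt n k) (special_wt n l) nu \<noteq> 0 \<and> self_dual n nu}"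
  then obtain T where "nu \<in> Lambda n" "self_dual n nu"
    and "is_LR_tableau n (special_wt n k) (special_wt n l) nu T"
    unfolding mem_Collect_eq lr_coeff_neq_0_iff by blast
  then interpret special_LR_tableau n k l nu T
    using assms by unfold_locales
  obtain p q where "nu = sd_wt n (k + l) p q" "k + q \<le> p + l" "p + q \<le> k + l"
    using self_dual_shape[OF \<open>self_dual n nu\<close>] .
  then show "nu \<in> (\<lambda>(q, p). sd_wt n (k + l) p q) ` {(q, p). k + q \<le> p + l \<and> p + q \<le> k + l}"
    by auto
next
  fix nu
  assume "nu \<in> (\<lambda>(q, p). sd_wt n (k + l) p q) ` {(q, p). k + q \<le> p + l \<and> p + q \<le> k + l}"
  then obtain p q where nu: "nu = sd_wt n (k + l) p q" and pq: "k + q \<le> p + l" "p + q \<le> k + l"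
    by auto
  interpret sd_LR_construction n k l p q
    using assms pq by unfold_locales
  show "nu \<in> {nu \<in> Lambda n. lr_coeff n (special_wt n k) (special_wt n l) nu \<noteq> 0 \<and> self_dual n nu}"
    unfolding mem_Collect_eq lr_coeff_neq_0_iff nu
    using tab_is_LR_tableau sd_wt_in_Lambda[OF n_ge_4 q_le_p] self_dual_sd_wt[OF n_ge_4 q_le_p] upper
    by auto
qed

theorem corollary6p7:
  fixes n k l :: nat
  assumes "n \<ge> 4" and "l \<le> k"
  shows "card {nu \<in> Lambda n.
            lr_coeff n (special_wt n k) (special_wt n l) nu \<noteq> 0 \<and> self_dual n nu}
         = (l + 1) ^ 2"
proof -
  have "inj_on (\<lambda>(q, p). sd_wt n (k + l) p q) {(q, p). k + q \<le> p + l \<and> p + q \<le> k + l}"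
    using assms(1) by (auto simp: inj_on_def sd_wt_inject)
  then show ?thesis
    unfolding self_dual_LR_support[OF assms]
    by (simp add: card_image card_self_dual_parameters[OF assms(2)])
qed

end
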